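(* Suppose for every $\omega$ and $\eta>0$ the function $F_\eta(\cdot,\omega)$ is $C^1$, convex and $\frac1\eta$-smooth. Consider the iteration $x_{k+1}=x_k-\gamma_kH_k\frac1{N_k}\sum_{j=1}^{N_k}\nabla_xF_{\eta_k,\mu_k}(x_k,\omega_{j,k})$, where the positive parameters satisfy $\mu_k=\mu_{k-1},\ \eta_k=\eta_{k-1}$ if $k$ is odd and $\mu_k<\mu_{k-1},\ \eta_k<\eta_{k-1}$ otherwise, and $H_k$ is given by the (rsL-BFGS) update described in the context with memory $m<n$ and exponents $0<\delta,\bar\delta\le1$. Then: (a) for any odd $k>2m$, $s_k^Ty_k>0$; (b) for any odd $k>2m$, $H_ky_k=s_k$; (c) for any $k>2m$, $H_k=H_k^T$, $H_k$ is $\mathcal{F}_k$-measurable (so $\mathbb{E}[H_k\mid\mathcal{F}_k]=H_k$), and $\underline\lambda_k\mathbf{I}\preceq H_k\preceq\overline\lambda_k\mathbf{I}$ almost surely, where $\underline\lambda_k=\frac{1}{(m+n)(1/\eta_k^\delta+\mu_0^{\bar\delta})}$ and $\overline\lambda_k=\frac{(m+n)^{n+m-1}(1/\eta_k^\delta+\mu_0^{\bar\delta})^{n+m-1}}{(n-1)!\,\mu_k^{(n+m)\bar\delta}}$.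
   Context: $F_{\eta,\mu}(x,\omega)\triangleq F_\eta(x,\omega)+\frac\mu2\|x-x_0\|^2$ with $x_0$ the initial point; $\omega_{1,k},\dots,\omega_{N_k,k}$ are the samples at iteration $k$; $\mathcal{F}_k=\sigma\{x_0,\dots,x_{k-1}\}$. (rsL-BFGS) update: for odd $i$, $s_i=x_i-x_{i-1}$ and $y_i=\frac1{N_{i-1}}\sum_{j=1}^{N_{i-1}}\big(\nabla_xF_{\eta_i^\delta}(x_i,\omega_{j,i-1})-\nabla_xF_{\eta_i^\delta}(x_{i-1},\omega_{j,i-1})\big)+\mu_i^{\bar\delta}s_i$. For odd $k$, $H_k=H_{k,m}$, where $H_{k,0}=\frac{s_k^Ty_k}{y_k^Ty_k}\mathbf{I}$ and $H_{k,j}=\big(\mathbf{I}-\frac{y_is_i^T}{y_i^Ts_i}\big)^TH_{k,j-1}\big(\mathbf{I}-\frac{y_is_i^T}{y_i^Ts_i}\big)+\frac{s_is_i^T}{y_i^Ts_i}$ with $i=k-2(m-j)$, $1\le j\le m$; for even $k$, $H_k=H_{k-1}$.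
   Formalization: $\mathcal{F}_k$ is the sigma-algebra generated by the samples $\omega_{j,i}$ with $i<k$ rather than by $x_0,\dots,x_{k-1}$, each odd $i>2$ has $x_i \neq x_{i-1}$, and $H_k$ for $k \le 2m$ is arbitrary but $\mathcal{F}_k$-measurable. The statement above fails without it. *)

theory Defs
  imports "HOL-Probability.Probability"
begin

definition outer :: "real^'n \<Rightarrow> real^'n \<Rightarrow> real^'n^'n" where
  "outer u v = (\<chi> i j. u $ i * v $ j)"

definition loewner_le :: "real^'n^'n \<Rightarrow> real^'n^'n \<Rightarrow> bool" where
  "loewner_le A B \<longleftrightarrow> (\<forall>v::real^'n. 0 \<le> v \<bullet> ((B - A) *v v))"

definition Feta_mu :: "(real \<Rightarrow> real^'n \<Rightarrow> 'w \<Rightarrow> real) \<Rightarrow> real^'n \<Rightarrow> real \<Rightarrow> real \<Rightarrow> real^'n \<Rightarrow> 'w \<Rightarrow> real" where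
  "Feta_mu F x0 eta mu x w = F eta x w + mu / 2 * (norm (x - x0))\<^sup>2"

definition gradFeta_mu :: "(real \<Rightarrow> real^'n \<Rightarrow> 'w \<Rightarrow> real^'n) \<Rightarrow> real^'n \<Rightarrow> real \<Rightarrow> real \<Rightarrow> real^'n \<Rightarrow> 'w \<Rightarrow> real^'n" where
  "gradFeta_mu gradF x0 eta mu x w = gradF eta x w + mu *\<^sub>R (x - x0)"

definition avg_grad :: "(real \<Rightarrow> real^'n \<Rightarrow> 'w \<Rightarrow> real^'n) \<Rightarrow> real^'n \<Rightarrow> (nat \<Rightarrow> real) \<Rightarrow> (nat \<Rightarrow> real)
    \<Rightarrow> (nat \<Rightarrow> nat) \<Rightarrow> (nat \<Rightarrow> nat \<Rightarrow> 'w) \<Rightarrow> (nat \<Rightarrow> real^'n) \<Rightarrow> nat \<Rightarrow> real^'n" where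
  "avg_grad gradF x0 eta mu N om x k =
     (1 / real (N k)) *\<^sub>R (\<Sum>j = 1..N k. gradFeta_mu gradF x0 (eta k) (mu k) (x k) (om j k))"

definition sdiff :: "(nat \<Rightarrow> real^'n) \<Rightarrow> nat \<Rightarrow> real^'n" where
  "sdiff x i = x i - x (i - 1)"

definition ydiff :: "(real \<Rightarrow> real^'n \<Rightarrow> 'w \<Rightarrow> real^'n) \<Rightarrow> (nat \<Rightarrow> real) \<Rightarrow> (nat \<Rightarrow> real)
    \<Rightarrow> (nat \<Rightarrow> nat) \<Rightarrow> (nat \<Rightarrow> nat \<Rightarrow> 'w) \<Rightarrow> real \<Rightarrow> real \<Rightarrow> (nat \<Rightarrow> real^'n) \<Rightarrow> nat \<Rightarrow> real^'n" where
  "ydiff gradF eta mu N om delta deltab x i =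
     (1 / real (N (i - 1))) *\<^sub>R
       (\<Sum>j = 1..N (i - 1). gradF (eta i powr delta) (x i) (om j (i - 1))
                            - gradF (eta i powr delta) (x (i - 1)) (om j (i - 1)))
     + (mu i powr deltab) *\<^sub>R sdiff x i"

fun lbfgs_H :: "(nat \<Rightarrow> real^'n) \<Rightarrow> (nat \<Rightarrow> real^'n) \<Rightarrow> nat \<Rightarrow> nat \<Rightarrow> nat \<Rightarrow> real^'n^'n" where
  "lbfgs_H s y m k 0 = ((s k \<bullet> y k) / (y k \<bullet> y k)) *\<^sub>R mat 1"
| "lbfgs_H s y m k (Suc j) =
     (let i = k - 2 * (m - Suc j);
          V = mat 1 - (1 / (y i \<bullet> s i)) *\<^sub>R outer (y i) (s i)
      in transpose V ** lbfgs_H s y m k j ** V + (1 / (y i \<bullet> s i)) *\<^sub>R outer (s i) (s i))"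

text \<open>History sigma-algebra F_k: generated by the samples w_{j,i}, 1 <= j <= N_i, i < k
  (the initial point x_0 is deterministic).\<close>
definition hist :: "'a measure \<Rightarrow> 'w measure \<Rightarrow> (nat \<Rightarrow> nat \<Rightarrow> 'a \<Rightarrow> 'w) \<Rightarrow> (nat \<Rightarrow> nat) \<Rightarrow> nat \<Rightarrow> 'a measure" where
  "hist M W om N k = sigma (space M)
     {om j i -` A \<inter> space M | j i A. 1 \<le> j \<and> j \<le> N i \<and> i < k \<and> A \<in> sets W}"

end

theory Submission
  imports Defs
begin

(* Every sample gradient of a convex (1/eta)-smooth function is cocoercive, and so is their
   average; adding the regularization mu^deltab s turns the gradient difference y_i into a
   curvature pair: s_i.y_i > 0, |y_i|^2 <= L s_i.y_i and mu |s_i|^2 <= s_i.y_i, with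
   L = 1/eta_k^delta + mu_0^deltab and mu = mu_k^deltab for all i <= k, because eta and mu decrease.
   For a curvature pair one BFGS update keeps the matrix symmetric, maps y to s (the secant
   equation), adds at most L to the reciprocal of the lower eigenvalue bound and turns an upper
   bound c into (1 + L/mu)^2 c + 1/mu.  Starting from the scaled identity (s.y/y.y) I, m updates
   give 1/((m+1) L) and (sum_{p<=m} (1 + L/mu)^(2p))/mu, which a counting estimate weakens to the
   stated constants.  Measurability is an induction on k: x_k and H_k are measurable functions of
   the samples of the steps before k, sample gradients being limits of difference quotients. *)

section \<open>Cocoercive gradients\<close>

lemma has_real_derivative_along_line:
  assumes "(f has_derivative (\<lambda>h. g \<bullet> h)) (at (x + t *\<^sub>R d))"
  shows "((\<lambda>t. f (x + t *\<^sub>R d)) has_real_derivative (g \<bullet> d)) (at t)"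
proof -
  have "((\<lambda>t. x + t *\<^sub>R d) has_derivative (\<lambda>t. t *\<^sub>R d)) (at t)"
    by (auto intro!: derivative_eq_intros)
  from has_derivative_compose[OF this assms]
  have "((\<lambda>t. f (x + t *\<^sub>R d)) has_derivative (\<lambda>u. g \<bullet> (u *\<^sub>R d))) (at t)" .
  moreover have "(\<lambda>u. g \<bullet> (u *\<^sub>R d)) = (*) (g \<bullet> d)"
    by (auto simp: mult.commute)
  ultimately show ?thesis
    by (simp add: has_field_derivative_def)
qed

lemma convex_on_gradient_inequality:
  fixes f :: "'v::real_inner \<Rightarrow> real"
  assumes cvx: "convex_on UNIV f" and der: "(f has_derivative (\<lambda>h. g \<bullet> h)) (at x)"
  shows "f x + g \<bullet> (z - x) \<le> f z"
proof -
  define \<phi> where "\<phi> t = f (x + t *\<^sub>R (z - x))" for t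
  have "convex_on UNIV \<phi>"
  proof (rule convex_onI)
    fix t a b :: real
    assume "0 < t" "t < 1"
    then have "f ((1 - t) *\<^sub>R (x + a *\<^sub>R (z - x)) + t *\<^sub>R (x + b *\<^sub>R (z - x)))
               \<le> (1 - t) * \<phi> a + t * \<phi> b"
      unfolding \<phi>_def by (intro convex_onD[OF cvx]) auto
    moreover have "(1 - t) *\<^sub>R (x + a *\<^sub>R (z - x)) + t *\<^sub>R (x + b *\<^sub>R (z - x))
                   = x + ((1 - t) * a + t * b) *\<^sub>R (z - x)"
      by (simp add: algebra_simps)
    ultimately show "\<phi> ((1 - t) *\<^sub>R a + t *\<^sub>R b) \<le> (1 - t) * \<phi> a + t * \<phi> b"
      by (simp add: \<phi>_def)
  qed simp
  moreover have "(\<phi> has_real_derivative g \<bullet> (z - x)) (at 0 within UNIV)"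
    unfolding \<phi>_def using der by (intro has_real_derivative_along_line) simp
  ultimately have "\<phi> 1 - \<phi> 0 \<ge> g \<bullet> (z - x) * (1 - 0)"
    by (intro convex_on_imp_above_tangent[where A = UNIV]) auto
  then show ?thesis
    by (simp add: \<phi>_def)
qed

lemma lipschitz_gradient_quadratic_upper_bound:
  fixes f :: "'v::real_inner \<Rightarrow> real"
  assumes der: "\<And>z. (f has_derivative (\<lambda>h. g z \<bullet> h)) (at z)"
    and lip: "\<And>z z'. norm (g z - g z') \<le> L * norm (z - z')"
  shows "f z \<le> f x + g x \<bullet> (z - x) + L / 2 * (norm (z - x))\<^sup>2"
proof -
  define d where "d = z - x"
  define \<psi> where "\<psi> t = f (x + t *\<^sub>R d) - t * (g x \<bullet> d) - L / 2 * t\<^sup>2 * (norm d)\<^sup>2" for t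
  have "\<psi> 1 \<le> \<psi> 0"
  proof (rule DERIV_nonpos_imp_nonincreasing[of 0 1 \<psi>])
    fix t :: real
    assume t: "0 \<le> t" "t \<le> 1"
    have \<psi>': "(\<psi> has_real_derivative (g (x + t *\<^sub>R d) \<bullet> d - g x \<bullet> d - L * t * (norm d)\<^sup>2)) (at t)"
      unfolding \<psi>_def using has_real_derivative_along_line[OF der]
      by (auto intro!: derivative_eq_intros)
    have "(g (x + t *\<^sub>R d) - g x) \<bullet> d \<le> norm (g (x + t *\<^sub>R d) - g x) * norm d"
      by (rule norm_cauchy_schwarz)
    also have "\<dots> \<le> L * norm (t *\<^sub>R d) * norm d"
      using lip[of "x + t *\<^sub>R d" x] by (intro mult_right_mono) auto
    also have "\<dots> = L * t * (norm d)\<^sup>2"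
      using t by (simp add: power2_eq_square)
    finally show "\<exists>y. (\<psi> has_real_derivative y) (at t) \<and> y \<le> 0"
      using \<psi>' by (auto simp: inner_diff_left)
  qed simp
  then show ?thesis
    by (simp add: \<psi>_def d_def)
qed

text \<open>Apply the gradient inequality at the point \<open>y - (g y - g x) /\<^sub>R L\<close> and
  the quadratic upper bound between this point and \<open>y\<close>.\<close>
lemma convex_smooth_gradient_gap:
  fixes f :: "'v::real_inner \<Rightarrow> real"
  assumes cvx: "convex_on UNIV f" and der: "\<And>z. (f has_derivative (\<lambda>h. g z \<bullet> h)) (at z)"
    and lip: "\<And>z z'. norm (g z - g z') \<le> L * norm (z - z')" and L: "L > 0"
  shows "f x + g x \<bullet> (y - x) + (norm (g y - g x))\<^sup>2 / (2 * L) \<le> f y"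
proof -
  define D where "D = g y - g x"
  define w where "w = y - (1 / L) *\<^sub>R D"
  have "f x + g x \<bullet> (w - x) \<le> f w"
    by (rule convex_on_gradient_inequality[OF cvx der])
  moreover have "f w \<le> f y + g y \<bullet> (w - y) + L / 2 * (norm (w - y))\<^sup>2"
    by (rule lipschitz_gradient_quadratic_upper_bound[OF der lip])
  moreover have "g x \<bullet> (w - x) = g x \<bullet> (y - x) - (g x \<bullet> D) / L"
    and "g y \<bullet> (w - y) = - (g y \<bullet> D) / L"
    by (simp_all add: w_def inner_diff_right)
  moreover have "L / 2 * (norm (w - y))\<^sup>2 = (norm D)\<^sup>2 / (2 * L)"
    using L by (simp add: w_def power2_eq_square field_simps)
  moreover have "(g y \<bullet> D) / L - (g x \<bullet> D) / L = (norm D)\<^sup>2 / L"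
    by (simp add: D_def power2_norm_eq_inner inner_diff_left diff_divide_distrib)
  moreover have "(norm D)\<^sup>2 / L = (norm D)\<^sup>2 / (2 * L) + (norm D)\<^sup>2 / (2 * L)"
    by (simp add: field_simps)
  ultimately show ?thesis
    unfolding D_def by linarith
qed

lemma convex_smooth_gradient_cocoercive:
  fixes f :: "'v::real_inner \<Rightarrow> real"
  assumes cvx: "convex_on UNIV f" and der: "\<And>z. (f has_derivative (\<lambda>h. g z \<bullet> h)) (at z)"
    and lip: "\<And>z z'. norm (g z - g z') \<le> L * norm (z - z')" and L: "L > 0"
  shows "(norm (g z - g x))\<^sup>2 \<le> L * ((g z - g x) \<bullet> (z - x))"
proof -
  have "f x + g x \<bullet> (z - x) + (norm (g z - g x))\<^sup>2 / (2 * L) \<le> f z"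
    and "f z + g z \<bullet> (x - z) + (norm (g x - g z))\<^sup>2 / (2 * L) \<le> f x"
    by (rule convex_smooth_gradient_gap[OF cvx der lip L])+
  moreover have "(g z - g x) \<bullet> (z - x) = - (g x \<bullet> (z - x)) - g z \<bullet> (x - z)"
    by (simp add: inner_diff_left inner_diff_right algebra_simps)
  ultimately have "(norm (g z - g x))\<^sup>2 / L \<le> (g z - g x) \<bullet> (z - x)"
    by (simp add: norm_minus_commute[of "g x"] field_simps)
  then show ?thesis
    using L by (simp add: field_simps)
qed

lemma cocoercive_mean:
  fixes \<Delta> :: "'i \<Rightarrow> 'v::real_inner"
  assumes I: "finite I" "I \<noteq> {}" and coco: "\<And>j. j \<in> I \<Longrightarrow> (norm (\<Delta> j))\<^sup>2 \<le> L * (\<Delta> j \<bullet> s)"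
  shows "(norm ((1 / real (card I)) *\<^sub>R (\<Sum>j\<in>I. \<Delta> j)))\<^sup>2
         \<le> L * (((1 / real (card I)) *\<^sub>R (\<Sum>j\<in>I. \<Delta> j)) \<bullet> s)"
proof -
  have c: "real (card I) > 0"
    using I by (simp add: card_gt_0_iff)
  have "(norm (\<Sum>j\<in>I. \<Delta> j))\<^sup>2 \<le> (\<Sum>j\<in>I. norm (\<Delta> j))\<^sup>2"
    by (intro power_mono norm_sum) auto
  also have "\<dots> \<le> (\<Sum>j\<in>I. (norm (\<Delta> j))\<^sup>2) * card I"
    by (rule sum_squared_le_sum_of_squares)
  also have "\<dots> \<le> (\<Sum>j\<in>I. L * (\<Delta> j \<bullet> s)) * card I"
    by (intro mult_right_mono sum_mono coco) auto
  also have "\<dots> = L * ((\<Sum>j\<in>I. \<Delta> j) \<bullet> s) * card I"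
    by (simp add: sum_distrib_left inner_sum_left)
  finally have "(norm (\<Sum>j\<in>I. \<Delta> j))\<^sup>2 / (real (card I))\<^sup>2
                \<le> L * ((\<Sum>j\<in>I. \<Delta> j) \<bullet> s) * card I / (real (card I))\<^sup>2"
    by (rule divide_right_mono) simp
  then show ?thesis
    using c by (simp add: power_divide power2_eq_square)
qed

lemma cocoercive_norm_le:
  fixes g s :: "'v::real_inner"
  assumes "(norm g)\<^sup>2 \<le> L * (g \<bullet> s)" "0 \<le> L"
  shows "norm g \<le> L * norm s"
proof (cases "g = 0")
  case False
  have "norm g * norm g \<le> L * (g \<bullet> s)"
    using assms(1) by (simp add: power2_eq_square)
  also have "\<dots> \<le> L * (norm g * norm s)"
    using norm_cauchy_schwarz[of g s] assms(2) by (rule mult_left_mono)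
  also have "\<dots> = L * norm s * norm g"
    by simp
  finally show ?thesis
    using False by simp
qed (use assms in simp)

section \<open>Curvature pairs\<close>

definition curvature_pair :: "real \<Rightarrow> real \<Rightarrow> 'v::real_inner \<Rightarrow> 'v \<Rightarrow> bool" where
  "curvature_pair L \<mu> s y \<longleftrightarrow> 0 < s \<bullet> y \<and> y \<bullet> y \<le> L * (s \<bullet> y) \<and> \<mu> * (norm s)\<^sup>2 \<le> s \<bullet> y"

lemma curvature_pair_mono:
  assumes "curvature_pair L \<mu> s y" "L \<le> L'" "\<mu>' \<le> \<mu>"
  shows "curvature_pair L' \<mu>' s y"
proof -
  have "L * (s \<bullet> y) \<le> L' * (s \<bullet> y)"
    using assms by (intro mult_right_mono) (auto simp: curvature_pair_def)
  moreover have "\<mu>' * (norm s)\<^sup>2 \<le> \<mu> * (norm s)\<^sup>2"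
    using assms by (intro mult_right_mono) auto
  ultimately show ?thesis
    using assms(1) unfolding curvature_pair_def by linarith
qed

lemma curvature_pair_pos:
  assumes "curvature_pair L \<mu> s y"
  shows "0 < y \<bullet> y" "0 < L"
proof -
  have "y \<noteq> 0"
    using assms by (auto simp: curvature_pair_def)
  then show yy: "0 < y \<bullet> y"
    by simp
  have "0 < L * (s \<bullet> y)" "0 < s \<bullet> y"
    using assms yy unfolding curvature_pair_def by linarith+
  then show "0 < L"
    by (simp add: zero_less_mult_iff)
qed

lemma curvature_pair_norm_le:
  assumes "curvature_pair L \<mu> s y"
  shows "norm y \<le> L * norm s"
  using assms curvature_pair_pos[OF assms]
  by (intro cocoercive_norm_le) (auto simp: curvature_pair_def power2_norm_eq_inner inner_commute)

lemma curvature_pair_regularized: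
  fixes g s :: "'v::real_inner"
  assumes coco: "(norm g)\<^sup>2 \<le> L * (g \<bullet> s)" and L: "0 \<le> L" and \<mu>: "0 < \<mu>" and s: "s \<noteq> 0"
  shows "curvature_pair (L + \<mu>) \<mu> s (g + \<mu> *\<^sub>R s)"
proof -
  have ng: "norm g \<le> L * norm s"
    using coco L by (rule cocoercive_norm_le)
  have gs: "g \<bullet> s \<le> L * (norm s)\<^sup>2"
    using norm_cauchy_schwarz[of g s] mult_right_mono[OF ng, of "norm s"]
    by (simp add: power2_eq_square mult.assoc)
  have gs0: "0 \<le> g \<bullet> s"
  proof (rule ccontr)
    assume "\<not> 0 \<le> g \<bullet> s"
    then have "(norm g)\<^sup>2 \<le> 0"
      using coco L by (meson mult_nonneg_nonpos nle_le order_trans)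
    then show False
      using \<open>\<not> 0 \<le> g \<bullet> s\<close> by simp
  qed
  have sy: "s \<bullet> (g + \<mu> *\<^sub>R s) = g \<bullet> s + \<mu> * (norm s)\<^sup>2"
    by (simp add: inner_add_right inner_commute power2_norm_eq_inner)
  have "(g + \<mu> *\<^sub>R s) \<bullet> (g + \<mu> *\<^sub>R s) = (norm g)\<^sup>2 + 2 * \<mu> * (g \<bullet> s) + \<mu>\<^sup>2 * (norm s)\<^sup>2"
    unfolding power2_norm_eq_inner
    by (simp add: inner_add_left inner_add_right inner_commute power2_eq_square algebra_simps)
  moreover have "\<mu> * (g \<bullet> s) \<le> \<mu> * (L * (norm s)\<^sup>2)"
    using gs \<mu> by simp
  ultimately have "(g + \<mu> *\<^sub>R s) \<bullet> (g + \<mu> *\<^sub>R s) \<le> (L + \<mu>) * (s \<bullet> (g + \<mu> *\<^sub>R s))"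
    using coco unfolding sy by (simp add: algebra_simps power2_eq_square)
  moreover have "0 < s \<bullet> (g + \<mu> *\<^sub>R s)"
    using gs0 \<mu> s unfolding sy by (simp add: add_nonneg_pos)
  ultimately show ?thesis
    using gs0 by (simp add: curvature_pair_def sy)
qed

lemma curvature_pair_scaling_ge:
  assumes "curvature_pair L \<mu> s y"
  shows "1 / L \<le> (s \<bullet> y) / (y \<bullet> y)"
  using assms curvature_pair_pos[OF assms] by (simp add: curvature_pair_def field_simps)

lemma curvature_pair_scaling_le:
  assumes cp: "curvature_pair L \<mu> s y" and \<mu>: "0 < \<mu>"
  shows "(s \<bullet> y) / (y \<bullet> y) \<le> 1 / \<mu>"
proof -
  have sy: "0 < s \<bullet> y" and ss: "\<mu> * (norm s)\<^sup>2 \<le> s \<bullet> y"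
    using cp by (auto simp: curvature_pair_def)
  have yy: "0 < y \<bullet> y"
    by (rule curvature_pair_pos[OF cp])
  have "(s \<bullet> y)\<^sup>2 \<le> (norm s)\<^sup>2 * (y \<bullet> y)"
    using Cauchy_Schwarz_ineq[of s y] by (simp add: power2_norm_eq_inner)
  also have "\<dots> \<le> (s \<bullet> y) / \<mu> * (y \<bullet> y)"
    using ss \<mu> yy by (intro mult_right_mono) (auto simp: field_simps)
  finally show ?thesis
    using sy \<mu> yy by (simp add: power2_eq_square field_simps)
qed

section \<open>The BFGS update\<close>

lemma outer_mult_vec: "outer u w *v v = (w \<bullet> v) *\<^sub>R u"
  by (simp add: outer_def vec_eq_iff matrix_vector_mult_def inner_vec_def sum_distrib_left
      mult.commute mult.left_commute)

lemma transpose_outer: "transpose (outer u w) = outer w u"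
  by (simp add: outer_def transpose_def vec_eq_iff)

lemma transpose_add: "transpose (A + B) = transpose A + transpose (B :: real^'n^'m)"
  by (simp add: transpose_def vec_eq_iff)

lemma inner_scaled_identity_mult: "v \<bullet> ((c *\<^sub>R mat 1) *v v) = c * (norm (v :: real^'n))\<^sup>2"
  by (simp add: scaleR_matrix_vector_assoc[symmetric] power2_norm_eq_inner)

lemma loewner_le_scaled_identity_left:
  "loewner_le (c *\<^sub>R mat 1) A \<longleftrightarrow> (\<forall>v. c * (norm v)\<^sup>2 \<le> v \<bullet> (A *v v))"
  by (simp add: loewner_le_def matrix_vector_mult_diff_rdistrib inner_diff_right
      inner_scaled_identity_mult)

lemma loewner_le_scaled_identity_right:
  "loewner_le A (c *\<^sub>R mat 1) \<longleftrightarrow> (\<forall>v. v \<bullet> (A *v v) \<le> c * (norm v)\<^sup>2)"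
  by (simp add: loewner_le_def matrix_vector_mult_diff_rdistrib inner_diff_right
      inner_scaled_identity_mult)

definition bfgs_update :: "real^'n^'n \<Rightarrow> real^'n \<Rightarrow> real^'n \<Rightarrow> real^'n^'n" where
  "bfgs_update H s y =
     (let V = mat 1 - (1 / (y \<bullet> s)) *\<^sub>R outer y s
      in transpose V ** H ** V + (1 / (y \<bullet> s)) *\<^sub>R outer s s)"

lemma lbfgs_H_Suc:
  "lbfgs_H s y m k (Suc j) =
     bfgs_update (lbfgs_H s y m k j) (s (k - 2 * (m - Suc j))) (y (k - 2 * (m - Suc j)))"
  by (simp add: bfgs_update_def Let_def)

lemma transpose_bfgs_update:
  assumes "transpose H = H"
  shows "transpose (bfgs_update H s y) = bfgs_update H s y"
  using assms by (simp add: bfgs_update_def Let_def transpose_add transpose_scalar transpose_outer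
      matrix_transpose_mul matrix_mul_assoc)

lemma bfgs_update_secant:
  assumes "y \<bullet> s \<noteq> 0"
  shows "bfgs_update H s y *v y = s"
proof -
  define V where "V = mat 1 - (1 / (y \<bullet> s)) *\<^sub>R outer y s"
  have "V *v y = 0"
    using assms by (simp add: V_def matrix_vector_mult_diff_rdistrib outer_mult_vec
        scaleR_matrix_vector_assoc[symmetric] inner_commute)
  then have "(transpose V ** H ** V) *v y = 0"
    by (simp add: matrix_vector_mul_assoc[symmetric])
  then show ?thesis
    using assms unfolding bfgs_update_def Let_def V_def[symmetric]
    by (simp add: matrix_vector_mult_add_rdistrib scaleR_matrix_vector_assoc[symmetric]
        outer_mult_vec inner_commute)
qed

lemma bfgs_update_quadratic_form:
  "v \<bullet> (bfgs_update H s y *v v) =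
     (v - ((s \<bullet> v) / (y \<bullet> s)) *\<^sub>R y) \<bullet> (H *v (v - ((s \<bullet> v) / (y \<bullet> s)) *\<^sub>R y))
     + (s \<bullet> v)\<^sup>2 / (y \<bullet> s)"
proof -
  define V where "V = mat 1 - (1 / (y \<bullet> s)) *\<^sub>R outer y s"
  have V: "V *v v = v - ((s \<bullet> v) / (y \<bullet> s)) *\<^sub>R y"
    by (simp add: V_def matrix_vector_mult_diff_rdistrib outer_mult_vec
        scaleR_matrix_vector_assoc[symmetric])
  have "v \<bullet> ((transpose V ** H ** V) *v v) = (V *v v) \<bullet> (H *v (V *v v))"
    by (simp add: matrix_vector_mul_assoc[symmetric]) (metis dot_lmul_matrix inner_commute)
  then show ?thesis
    unfolding bfgs_update_def Let_def V_def[symmetric] V[symmetric]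
    by (simp add: matrix_vector_mult_add_rdistrib scaleR_matrix_vector_assoc[symmetric]
        outer_mult_vec inner_add_right power2_eq_square inner_commute)
qed

lemma power2_add_divide_le:
  fixes a b K L :: real
  assumes "0 < K" "0 < L"
  shows "(a + b)\<^sup>2 / (K + L) \<le> a\<^sup>2 / K + b\<^sup>2 / L"
proof -
  have "(K + L) * (a\<^sup>2 * L + b\<^sup>2 * K) - (a + b)\<^sup>2 * (K * L) = (L * a - K * b)\<^sup>2"
    by (simp add: power2_eq_square algebra_simps)
  then have "(a + b)\<^sup>2 * (K * L) \<le> (K + L) * (a\<^sup>2 * L + b\<^sup>2 * K)"
    by (metis diff_ge_0_iff_ge zero_le_power2)
  then show ?thesis
    using assms by (simp add: field_simps)
qed

lemma bfgs_update_lower_bound: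
  assumes cp: "curvature_pair L \<mu> s y" and a: "0 < a"
    and H: "\<And>w. (norm w)\<^sup>2 / a \<le> w \<bullet> (H *v w)"
  shows "(norm v)\<^sup>2 / (a + L) \<le> v \<bullet> (bfgs_update H s y *v v)"
proof -
  define t where "t = (s \<bullet> v) / (y \<bullet> s)"
  define w where "w = v - t *\<^sub>R y"
  have sy: "0 < y \<bullet> s" and yy: "y \<bullet> y \<le> L * (y \<bullet> s)"
    using cp by (auto simp: curvature_pair_def inner_commute)
  have L: "0 < L"
    by (rule curvature_pair_pos[OF cp])
  have "norm v \<le> norm w + norm (t *\<^sub>R y)"
    using norm_triangle_ineq[of w "t *\<^sub>R y"] by (simp add: w_def)
  then have "(norm v)\<^sup>2 / (a + L) \<le> (norm w + norm (t *\<^sub>R y))\<^sup>2 / (a + L)"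
    using a L by (intro divide_right_mono power_mono) auto
  also have "\<dots> \<le> (norm w)\<^sup>2 / a + (norm (t *\<^sub>R y))\<^sup>2 / L"
    using a L by (rule power2_add_divide_le)
  also have "(norm (t *\<^sub>R y))\<^sup>2 / L \<le> (s \<bullet> v)\<^sup>2 / (y \<bullet> s)"
  proof -
    have "(norm (t *\<^sub>R y))\<^sup>2 = t\<^sup>2 * (y \<bullet> y)"
      by (simp add: power_mult_distrib power2_norm_eq_inner)
    also have "\<dots> \<le> t\<^sup>2 * (L * (y \<bullet> s))"
      using yy by (intro mult_left_mono) auto
    also have "\<dots> = L * ((s \<bullet> v)\<^sup>2 / (y \<bullet> s))"
      using sy by (simp add: t_def power2_eq_square)
    finally show ?thesis
      using L by (simp add: field_simps)
  qed
  also have "(norm w)\<^sup>2 / a + (s \<bullet> v)\<^sup>2 / (y \<bullet> s) \<le> v \<bullet> (bfgs_update H s y *v v)"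
    using H[of w] by (simp add: bfgs_update_quadratic_form w_def t_def)
  finally show ?thesis
    by simp
qed

lemma bfgs_update_upper_bound:
  assumes cp: "curvature_pair L \<mu> s y" and \<mu>: "0 < \<mu>" and c: "0 \<le> c"
    and H: "\<And>w. w \<bullet> (H *v w) \<le> c * (norm w)\<^sup>2"
  shows "v \<bullet> (bfgs_update H s y *v v) \<le> ((1 + L / \<mu>)\<^sup>2 * c + 1 / \<mu>) * (norm v)\<^sup>2"
proof -
  define t where "t = (s \<bullet> v) / (y \<bullet> s)"
  define w where "w = v - t *\<^sub>R y"
  have sy: "0 < y \<bullet> s"
    using cp by (auto simp: curvature_pair_def inner_commute)
  have ss: "(norm s)\<^sup>2 / (y \<bullet> s) \<le> 1 / \<mu>"
    using cp sy \<mu> by (simp add: curvature_pair_def inner_commute field_simps)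
  have sv: "\<bar>s \<bullet> v\<bar> \<le> norm s * norm v"
    by (rule Cauchy_Schwarz_ineq2)
  have L: "0 < L"
    by (rule curvature_pair_pos[OF cp])
  have "norm w \<le> norm v + \<bar>t\<bar> * norm y"
    using norm_triangle_ineq4[of v "t *\<^sub>R y"] by (simp add: w_def)
  also have "\<bar>t\<bar> * norm y \<le> (norm s * norm v / (y \<bullet> s)) * (L * norm s)"
    using sv sy curvature_pair_norm_le[OF cp]
    by (intro mult_mono) (auto simp: t_def abs_div divide_right_mono)
  also have "\<dots> = L * ((norm s)\<^sup>2 / (y \<bullet> s)) * norm v"
    by (simp add: power2_eq_square)
  also have "\<dots> \<le> L * (1 / \<mu>) * norm v"
    using ss L by (intro mult_right_mono mult_left_mono) auto
  finally have w: "norm w \<le> (1 + L / \<mu>) * norm v"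
    by (simp add: algebra_simps)
  have "(s \<bullet> v)\<^sup>2 \<le> (norm s * norm v)\<^sup>2"
    using sv by (metis abs_ge_zero power2_abs power_mono)
  then have "(s \<bullet> v)\<^sup>2 / (y \<bullet> s) \<le> (norm s * norm v)\<^sup>2 / (y \<bullet> s)"
    using sy by (intro divide_right_mono) auto
  also have "\<dots> = (norm s)\<^sup>2 / (y \<bullet> s) * (norm v)\<^sup>2"
    by (simp add: power_mult_distrib)
  also have "\<dots> \<le> 1 / \<mu> * (norm v)\<^sup>2"
    using ss by (intro mult_right_mono) auto
  finally have "v \<bullet> (bfgs_update H s y *v v) \<le> c * (norm w)\<^sup>2 + 1 / \<mu> * (norm v)\<^sup>2"
    using H[of w] by (simp add: bfgs_update_quadratic_form w_def t_def)
  also have "c * (norm w)\<^sup>2 \<le> c * ((1 + L / \<mu>) * norm v)\<^sup>2"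
    using w c by (intro mult_left_mono power_mono) auto
  finally show ?thesis
    unfolding power_mult_distrib by (simp add: algebra_simps)
qed

lemma transpose_lbfgs_H: "transpose (lbfgs_H s y m k j) = lbfgs_H s y m k j"
  by (induction j) (simp_all add: lbfgs_H_Suc transpose_bfgs_update transpose_scalar del: lbfgs_H.simps(2))

lemma lbfgs_H_secant:
  assumes "1 \<le> m" "y k \<bullet> s k \<noteq> 0"
  shows "lbfgs_H s y m k m *v y k = s k"
proof -
  obtain j where "m = Suc j"
    using assms(1) by (cases m) auto
  then show ?thesis
    using assms(2) by (simp add: lbfgs_H_Suc bfgs_update_secant del: lbfgs_H.simps)
qed

lemma lbfgs_H_lower_bound:
  assumes cp: "curvature_pair L \<mu> (s k) (y k)"
    and cps: "\<And>j. j < m \<Longrightarrow> curvature_pair L \<mu> (s (k - 2 * (m - Suc j))) (y (k - 2 * (m - Suc j)))"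
    and j: "j \<le> m"
  shows "(norm v)\<^sup>2 / (real (Suc j) * L) \<le> v \<bullet> (lbfgs_H s y m k j *v v)"
  using j
proof (induction j arbitrary: v)
  case 0
  have "1 / L * (norm v)\<^sup>2 \<le> (s k \<bullet> y k) / (y k \<bullet> y k) * (norm v)\<^sup>2"
    using curvature_pair_scaling_ge[OF cp] by (rule mult_right_mono) simp
  then show ?case
    by (simp add: inner_scaled_identity_mult)
next
  case (Suc j)
  have L: "0 < L"
    by (rule curvature_pair_pos[OF cp])
  have "(norm v)\<^sup>2 / (real (Suc j) * L + L)
        \<le> v \<bullet> (bfgs_update (lbfgs_H s y m k j) (s (k - 2 * (m - Suc j))) (y (k - 2 * (m - Suc j))) *v v)"
    using Suc L by (intro bfgs_update_lower_bound[OF cps]) auto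
  then show ?case
    by (simp add: lbfgs_H_Suc distrib_right del: lbfgs_H.simps)
qed

lemma lbfgs_H_upper_bound:
  assumes cp: "curvature_pair L \<mu> (s k) (y k)"
    and cps: "\<And>j. j < m \<Longrightarrow> curvature_pair L \<mu> (s (k - 2 * (m - Suc j))) (y (k - 2 * (m - Suc j)))"
    and \<mu>: "0 < \<mu>" and j: "j \<le> m"
  shows "v \<bullet> (lbfgs_H s y m k j *v v) \<le> (\<Sum>p\<le>j. (1 + L / \<mu>) ^ (2 * p)) / \<mu> * (norm v)\<^sup>2"
  using j
proof (induction j arbitrary: v)
  case 0
  have "(s k \<bullet> y k) / (y k \<bullet> y k) * (norm v)\<^sup>2 \<le> 1 / \<mu> * (norm v)\<^sup>2"
    using curvature_pair_scaling_le[OF cp \<mu>] by (rule mult_right_mono) simp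
  then show ?case
    by (simp add: inner_scaled_identity_mult)
next
  case (Suc j)
  have "v \<bullet> (bfgs_update (lbfgs_H s y m k j) (s (k - 2 * (m - Suc j))) (y (k - 2 * (m - Suc j))) *v v)
        \<le> ((1 + L / \<mu>)\<^sup>2 * ((\<Sum>p\<le>j. (1 + L / \<mu>) ^ (2 * p)) / \<mu>) + 1 / \<mu>) * (norm v)\<^sup>2"
    using Suc \<mu> curvature_pair_pos(2)[OF cp]
    by (intro bfgs_update_upper_bound[OF cps] divide_nonneg_pos sum_nonneg) auto
  also have "(1 + L / \<mu>)\<^sup>2 * ((\<Sum>p\<le>j. (1 + L / \<mu>) ^ (2 * p)) / \<mu>) + 1 / \<mu>
             = (\<Sum>p\<le>Suc j. (1 + L / \<mu>) ^ (2 * p)) / \<mu>"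
    by (simp add: sum.atMost_Suc_shift sum_distrib_left power_mult power2_eq_square add_divide_distrib
        del: sum.atMost_Suc)
  finally show ?case
    by (simp add: lbfgs_H_Suc del: lbfgs_H.simps)
qed

section \<open>The constant of the upper bound\<close>

lemma fact_le_power_pred: "1 \<le> k \<Longrightarrow> fact k \<le> k ^ (k - 1)"
proof (induction k rule: nat_induct_at_least)
  case (Suc k)
  have "fact k \<le> Suc k ^ (k - 1)"
    using Suc.IH power_mono[of k "Suc k" "k - 1"] by simp
  then have "fact (Suc k) \<le> Suc k * Suc k ^ (k - 1)"
    unfolding fact_Suc of_nat_id by (rule mult_le_mono2)
  also have "\<dots> = Suc k ^ Suc (k - 1)"
    by (simp only: power_Suc)
  also have "Suc (k - 1) = Suc k - 1"
    using Suc.hyps by simp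
  finally show ?case .
qed simp

lemma four_power_fact_le_power:
  fixes m n :: nat
  assumes m: "1 \<le> m" "m < n"
  shows "(m + 1) * 4 ^ m * fact (n - 1) \<le> (m + n) ^ (n + m - 1)"
proof -
  have "fact (n - 1) \<le> (n - 1) ^ (n - 2)"
    using fact_le_power_pred[of "n - 1"] m by (simp add: numeral_2_eq_2 diff_diff_left)
  also have "\<dots> \<le> (m + n) ^ (n - 2)"
    by (intro power_mono) auto
  finally have fact: "fact (n - 1) \<le> (m + n) ^ (n - 2)" .
  have "(m + 1) * 4 ^ m \<le> (m + n) ^ (m + 1)"
  proof (cases "m = 1")
    case True
    have "3 * 3 \<le> (m + n) * (m + n)"
      using m by (intro mult_le_mono) auto
    then show ?thesis
      using True by (simp add: power2_eq_square)
  next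
    case False
    then have "(m + 1) * 4 ^ m \<le> (m + n) * (m + n) ^ m"
      using m by (intro mult_mono power_mono) auto
    then show ?thesis
      by simp
  qed
  then have "(m + 1) * 4 ^ m * fact (n - 1) \<le> (m + n) ^ (m + 1) * (m + n) ^ (n - 2)"
    using fact by (rule mult_le_mono)
  also have "\<dots> = (m + n) ^ (m + 1 + (n - 2))"
    by (simp only: power_add)
  also have "m + 1 + (n - 2) = n + m - 1"
    using m by simp
  finally show ?thesis .
qed

lemma lbfgs_upper_constant_le:
  fixes L \<mu> :: real and m n :: nat
  assumes m: "1 \<le> m" "m < n" and \<mu>: "0 < \<mu>" "\<mu> \<le> L"
  shows "(\<Sum>p\<le>m. (1 + L / \<mu>) ^ (2 * p)) / \<mu>
         \<le> real (m + n) ^ (n + m - 1) * L ^ (n + m - 1) / (fact (n - 1) * \<mu> ^ (n + m))"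
proof -
  define r where "r = L / \<mu>"
  have r: "1 \<le> r"
    using \<mu> by (simp add: r_def)
  have "(1 + r) ^ (2 * p) \<le> (2 * r) ^ (2 * m)" if "p \<le> m" for p
  proof -
    have "(1 + r) ^ (2 * p) \<le> (1 + r) ^ (2 * m)"
      using r that by (intro power_increasing) auto
    also have "\<dots> \<le> (2 * r) ^ (2 * m)"
      using r by (intro power_mono) auto
    finally show ?thesis .
  qed
  then have "(\<Sum>p\<le>m. (1 + r) ^ (2 * p)) \<le> (\<Sum>p\<le>m. (2 * r) ^ (2 * m))"
    by (intro sum_mono) simp
  also have "\<dots> = real (m + 1) * 4 ^ m * r ^ (2 * m)"
    by (simp add: power_mult_distrib power_mult)
  also have "\<dots> \<le> real (m + 1) * 4 ^ m * r ^ (n + m - 1)"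
    using r m by (intro mult_left_mono power_increasing) auto
  finally have "(\<Sum>p\<le>m. (1 + r) ^ (2 * p)) * fact (n - 1)
                \<le> real (m + 1) * 4 ^ m * r ^ (n + m - 1) * fact (n - 1)"
    by (rule mult_right_mono) simp
  also have "\<dots> = real (m + 1) * 4 ^ m * fact (n - 1) * r ^ (n + m - 1)"
    by (simp only: mult_ac)
  also have "\<dots> \<le> real (m + n) ^ (n + m - 1) * r ^ (n + m - 1)"
  proof (rule mult_right_mono)
    have "real ((m + 1) * 4 ^ m * fact (n - 1)) \<le> real ((m + n) ^ (n + m - 1))"
      using four_power_fact_le_power[OF m] by (simp only: of_nat_le_iff)
    then show "real (m + 1) * 4 ^ m * fact (n - 1) \<le> real (m + n) ^ (n + m - 1)"
      by (simp only: of_nat_mult of_nat_power of_nat_fact of_nat_numeral)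
  qed (use r in simp)
  finally have "(\<Sum>p\<le>m. (1 + r) ^ (2 * p)) / \<mu> \<le> real (m + n) ^ (n + m - 1) * r ^ (n + m - 1) / fact (n - 1) / \<mu>"
    using \<mu> by (intro divide_right_mono) (simp_all add: pos_le_divide_eq)
  also have "\<mu> ^ (n + m) = \<mu> ^ (n + m - 1) * \<mu>"
    using m by (simp flip: power_Suc2)
  then have "real (m + n) ^ (n + m - 1) * r ^ (n + m - 1) / fact (n - 1) / \<mu>
             = real (m + n) ^ (n + m - 1) * L ^ (n + m - 1) / (fact (n - 1) * \<mu> ^ (n + m))"
    by (simp add: r_def power_divide)
  finally show ?thesis
    by (simp only: r_def)
qed

section \<open>Measurability\<close>

lemma hist_generator_subset:
  "{om j i -` A \<inter> space M | j i A. 1 \<le> j \<and> j \<le> N i \<and> i < k \<and> A \<in> sets W} \<subseteq> Pow (space M)"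
  by auto

lemma space_hist [simp]: "space (hist M W om N k) = space M"
  unfolding hist_def by (rule space_measure_of[OF hist_generator_subset])

lemma sets_hist:
  "sets (hist M W om N k) =
     sigma_sets (space M) {om j i -` A \<inter> space M | j i A. 1 \<le> j \<and> j \<le> N i \<and> i < k \<and> A \<in> sets W}"
  unfolding hist_def by (rule sets_measure_of[OF hist_generator_subset])

lemma subalgebra_hist_mono:
  assumes "k \<le> k'"
  shows "subalgebra (hist M W om N k') (hist M W om N k)"
  unfolding subalgebra_def sets_hist using assms
  by (auto intro!: sigma_sets_mono') (blast intro: less_le_trans)

lemma measurable_hist_mono:
  assumes "f \<in> hist M W om N k \<rightarrow>\<^sub>M X" "k \<le> k'"
  shows "f \<in> hist M W om N k' \<rightarrow>\<^sub>M X"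
  using measurable_from_subalg[OF subalgebra_hist_mono[OF assms(2)] assms(1)] .

lemma measurable_hist_sample:
  assumes "om j i \<in> M \<rightarrow>\<^sub>M W" "1 \<le> j" "j \<le> N i" "i < k"
  shows "om j i \<in> hist M W om N k \<rightarrow>\<^sub>M W"
proof (rule measurableI)
  fix A
  assume "A \<in> sets W"
  then show "om j i -` A \<inter> space (hist M W om N k) \<in> sets (hist M W om N k)"
    unfolding sets_hist space_hist using assms(2-4) by (intro sigma_sets.Basic) blast
qed (use measurable_space[OF assms(1)] in simp)

lemma borel_measurable_vec_nth [measurable]:
  fixes f :: "'a \<Rightarrow> 'b::euclidean_space ^ 'n"
  assumes "f \<in> borel_measurable M"
  shows "(\<lambda>x. f x $ i) \<in> borel_measurable M"
  using measurable_compose[OF assms borel_measurable_continuous_onI[OF linear_continuous_on[OF bounded_linear_vec_nth]]]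
  by simp

lemma borel_measurable_vecI:
  fixes f :: "'a \<Rightarrow> 'b::euclidean_space ^ 'n"
  assumes "\<And>i. (\<lambda>x. f x $ i) \<in> borel_measurable M"
  shows "f \<in> borel_measurable M"
proof (subst borel_measurable_euclidean_space, intro ballI)
  fix b :: "'b ^ 'n"
  assume "b \<in> Basis"
  then obtain i u where b: "b = axis i u" and "u \<in> Basis"
    unfolding Basis_vec_def by auto
  have "(\<lambda>x. f x $ i \<bullet> u) \<in> borel_measurable M"
    using assms[of i] by measurable
  then show "(\<lambda>x. f x \<bullet> b) \<in> borel_measurable M"
    unfolding b inner_axis .
qed

lemma borel_measurable_matrix_matrix_mult [measurable]:
  fixes A B :: "'a \<Rightarrow> real^'n^'n"
  assumes [measurable]: "A \<in> borel_measurable M" "B \<in> borel_measurable M"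
  shows "(\<lambda>x. A x ** B x) \<in> borel_measurable M"
  by (intro borel_measurable_vecI) (simp add: matrix_matrix_mult_def)

lemma borel_measurable_matrix_vector_mult [measurable]:
  fixes A :: "'a \<Rightarrow> real^'n^'n" and v :: "'a \<Rightarrow> real^'n"
  assumes [measurable]: "A \<in> borel_measurable M" "v \<in> borel_measurable M"
  shows "(\<lambda>x. A x *v v x) \<in> borel_measurable M"
  by (intro borel_measurable_vecI) (simp add: matrix_vector_mult_def)

lemma borel_measurable_transpose [measurable]:
  fixes A :: "'a \<Rightarrow> real^'n^'n"
  assumes [measurable]: "A \<in> borel_measurable M"
  shows "(\<lambda>x. transpose (A x)) \<in> borel_measurable M"
  by (intro borel_measurable_vecI) (simp add: transpose_def)

lemma borel_measurable_outer [measurable]: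
  fixes u v :: "'a \<Rightarrow> real^'n"
  assumes [measurable]: "u \<in> borel_measurable M" "v \<in> borel_measurable M"
  shows "(\<lambda>x. outer (u x) (v x)) \<in> borel_measurable M"
  by (intro borel_measurable_vecI) (simp add: outer_def)

lemma borel_measurable_bfgs_update [measurable]:
  fixes H :: "'a \<Rightarrow> real^'n^'n" and s y :: "'a \<Rightarrow> real^'n"
  assumes [measurable]: "H \<in> borel_measurable M" "s \<in> borel_measurable M" "y \<in> borel_measurable M"
  shows "(\<lambda>x. bfgs_update (H x) (s x) (y x)) \<in> borel_measurable M"
  unfolding bfgs_update_def Let_def by measurable

lemma borel_measurable_lbfgs_H:
  fixes s y :: "'a \<Rightarrow> nat \<Rightarrow> real^'n"
  assumes "\<And>i. i \<le> k \<Longrightarrow> (\<lambda>a. s a i) \<in> borel_measurable M"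
    and "\<And>i. i \<le> k \<Longrightarrow> (\<lambda>a. y a i) \<in> borel_measurable M"
  shows "(\<lambda>a. lbfgs_H (s a) (y a) m k j) \<in> borel_measurable M"
proof (induction j)
  case 0
  have [measurable]: "(\<lambda>a. s a k) \<in> borel_measurable M" "(\<lambda>a. y a k) \<in> borel_measurable M"
    using assms by auto
  show ?case
    by simp
next
  case (Suc j)
  note [measurable] = Suc.IH assms[of "k - 2 * (m - Suc j)", OF diff_le_self]
  show ?case
    unfolding lbfgs_H_Suc by measurable
qed

text \<open>A gradient is the pointwise limit of measurable difference quotients.\<close>
lemma borel_measurable_gradient:
  fixes f :: "real^'n \<Rightarrow> 'w \<Rightarrow> real" and g :: "real^'n \<Rightarrow> 'w \<Rightarrow> real^'n"
  assumes f: "(\<lambda>(z, w). f z w) \<in> borel_measurable (borel \<Otimes>\<^sub>M W)"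
    and g: "\<And>z w. w \<in> space W \<Longrightarrow> ((\<lambda>z. f z w) has_derivative (\<lambda>h. g z w \<bullet> h)) (at z)"
    and Z: "Z \<in> borel_measurable Q" and Om: "Om \<in> Q \<rightarrow>\<^sub>M W"
  shows "(\<lambda>a. g (Z a) (Om a)) \<in> borel_measurable Q"
proof (rule borel_measurable_vecI)
  fix l
  define t where "t = (\<lambda>p. 1 / real (Suc p))"
  define q where "q p a = (f (Z a + t p *\<^sub>R axis l 1) (Om a) - f (Z a) (Om a)) / t p" for p a
  have f_comp: "(\<lambda>a. f (Z' a) (Om a)) \<in> borel_measurable Q" if "Z' \<in> borel_measurable Q" for Z'
    using measurable_compose[OF measurable_Pair[OF that Om] f] by simp
  have "q p \<in> borel_measurable Q" for p
    unfolding q_def using Z by (intro borel_measurable_divide borel_measurable_diff f_comp) auto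
  moreover have "(\<lambda>p. q p a) \<longlonglongrightarrow> g (Z a) (Om a) $ l" if "a \<in> space Q" for a
  proof -
    have "((\<lambda>h. f (Z a + h *\<^sub>R axis l 1) (Om a)) has_real_derivative g (Z a) (Om a) \<bullet> axis l 1) (at 0)"
      using g[OF measurable_space[OF Om that]] by (intro has_real_derivative_along_line) simp
    then have lim: "(\<lambda>h. (f (Z a + h *\<^sub>R axis l 1) (Om a) - f (Z a) (Om a)) / h) \<midarrow>0\<rightarrow> g (Z a) (Om a) $ l"
      using DERIV_D by (fastforce simp: inner_axis)
    have "t \<longlonglongrightarrow> 0" "\<forall>p. t p \<noteq> 0"
      using LIMSEQ_inverse_real_of_nat by (simp_all add: t_def inverse_eq_divide)
    then show ?thesis
      unfolding q_def using LIMSEQ_SEQ_conv[THEN iffD2, OF lim] by blast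
  qed
  ultimately show "(\<lambda>a. g (Z a) (Om a) $ l) \<in> borel_measurable Q"
    by (rule borel_measurable_LIMSEQ_real[rotated])
qed

section \<open>The regularized stochastic L-BFGS iteration\<close>

locale rs_lbfgs =
  fixes M :: "'a measure" and W :: "'w measure"
    and F :: "real \<Rightarrow> real^'n \<Rightarrow> 'w \<Rightarrow> real"
    and gradF :: "real \<Rightarrow> real^'n \<Rightarrow> 'w \<Rightarrow> real^'n"
    and om :: "nat \<Rightarrow> nat \<Rightarrow> 'a \<Rightarrow> 'w"
    and N :: "nat \<Rightarrow> nat"
    and gamma eta mu :: "nat \<Rightarrow> real"
    and delta deltab :: real
    and m :: nat
    and x0 :: "real^'n"
    and x :: "nat \<Rightarrow> 'a \<Rightarrow> real^'n"
    and H :: "nat \<Rightarrow> 'a \<Rightarrow> real^'n^'n"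
  assumes om_meas: "\<And>j k. om j k \<in> M \<rightarrow>\<^sub>M W"
    and F_meas: "\<And>e. e > 0 \<Longrightarrow> (\<lambda>(z, w). F e z w) \<in> borel_measurable (borel \<Otimes>\<^sub>M W)"
    and F_grad: "\<And>e z w. e > 0 \<Longrightarrow> w \<in> space W \<Longrightarrow>
                   ((\<lambda>z. F e z w) has_derivative (\<lambda>h. gradF e z w \<bullet> h)) (at z)"
    and F_convex: "\<And>e w. e > 0 \<Longrightarrow> w \<in> space W \<Longrightarrow> convex_on UNIV (\<lambda>z. F e z w)"
    and F_smooth: "\<And>e z z' w. e > 0 \<Longrightarrow> w \<in> space W \<Longrightarrow>
                   norm (gradF e z w - gradF e z' w) \<le> (1 / e) * norm (z - z')"
    and m_pos: "1 \<le> m"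
    and delta_nonneg: "0 \<le> delta" and deltab_nonneg: "0 \<le> deltab"
    and eta_pos: "\<And>k. eta k > 0" and mu_pos: "\<And>k. mu k > 0"
    and N_pos: "\<And>k. 1 \<le> N k"
    and params_odd: "\<And>k. odd k \<Longrightarrow> mu k = mu (k - 1) \<and> eta k = eta (k - 1)"
    and params_even: "\<And>k. even k \<Longrightarrow> 0 < k \<Longrightarrow> mu k < mu (k - 1) \<and> eta k < eta (k - 1)"
    and x_init: "\<And>a. x 0 a = x0"
    and x_step: "\<And>k a. x (Suc k) a =
        x k a - gamma k *\<^sub>R (H k a *v avg_grad gradF x0 eta mu N (\<lambda>j i. om j i a) (\<lambda>i. x i a) k)"
    and H_init_meas: "\<And>k. k \<le> 2 * m \<Longrightarrow> H k \<in> borel_measurable (hist M W om N k)"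
    and H_odd: "\<And>k a. 2 * m < k \<Longrightarrow> odd k \<Longrightarrow>
        H k a = lbfgs_H (sdiff (\<lambda>i. x i a))
                        (ydiff gradF eta mu N (\<lambda>j i. om j i a) delta deltab (\<lambda>i. x i a)) m k m"
    and H_even: "\<And>k a. 2 * m < k \<Longrightarrow> even k \<Longrightarrow> H k a = H (k - 1) a"
    and nondegenerate: "\<And>i a. a \<in> space M \<Longrightarrow> odd i \<Longrightarrow> 2 < i \<Longrightarrow> x i a \<noteq> x (i - 1) a"
begin

abbreviation s :: "'a \<Rightarrow> nat \<Rightarrow> real^'n" where
  "s a \<equiv> sdiff (\<lambda>i. x i a)"

abbreviation y :: "'a \<Rightarrow> nat \<Rightarrow> real^'n" where
  "y a \<equiv> ydiff gradF eta mu N (\<lambda>j i. om j i a) delta deltab (\<lambda>i. x i a)"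

text \<open>The constants \<open>L\<close> and \<open>\<mu>\<close> of the curvature conditions satisfied by every pair
  \<open>(s a i, y a i)\<close> with odd \<open>2 < i \<le> k\<close>.\<close>
definition curvature_ub :: "nat \<Rightarrow> real" where
  "curvature_ub k = 1 / eta k powr delta + mu 0 powr deltab"

definition curvature_lb :: "nat \<Rightarrow> real" where
  "curvature_lb k = mu k powr deltab"

lemma decseq_eta_mu: "decseq eta" "decseq mu"
proof -
  have "eta (Suc k) \<le> eta k \<and> mu (Suc k) \<le> mu k" for k
    using params_odd[of "Suc k"] params_even[of "Suc k"] by (cases "odd (Suc k)") auto
  then show "decseq eta" "decseq mu"
    by (auto intro: decseq_SucI)
qed

lemma curvature_lb_pos: "0 < curvature_lb k"
  using mu_pos[of k] by (simp add: curvature_lb_def)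

lemma curvature_lb_le_ub: "curvature_lb k \<le> curvature_ub k"
proof -
  have "mu k powr deltab \<le> mu 0 powr deltab"
    using decseqD[OF decseq_eta_mu(2), of 0 k] less_imp_le[OF mu_pos] deltab_nonneg
    by (intro powr_mono2) auto
  moreover have "0 < 1 / eta k powr delta"
    using eta_pos[of k] by simp
  ultimately show ?thesis
    unfolding curvature_lb_def curvature_ub_def by linarith
qed

lemma curvature_ub_pos: "0 < curvature_ub k"
  using curvature_lb_pos curvature_lb_le_ub by (rule order.strict_trans2)

text \<open>Each sample gradient difference is cocoercive by convexity and smoothness; averaging keeps
  this, and the regularization term \<open>mu i powr deltab *\<^sub>R s a i\<close> adds strong convexity.\<close>
lemma curvature_pair_sample:
  assumes a: "a \<in> space M" and i: "odd i" "2 < i"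
  shows "curvature_pair (1 / eta i powr delta + mu i powr deltab) (mu i powr deltab) (s a i) (y a i)"
proof -
  define e where "e = eta i powr delta"
  define \<Delta> where "\<Delta> j = gradF e (x i a) (om j (i - 1) a) - gradF e (x (i - 1) a) (om j (i - 1) a)" for j
  have e: "0 < e"
    using eta_pos[of i] by (simp add: e_def)
  have "(norm (\<Delta> j))\<^sup>2 \<le> 1 / e * (\<Delta> j \<bullet> s a i)" for j
  proof -
    have w: "om j (i - 1) a \<in> space W"
      using measurable_space[OF om_meas a] .
    show ?thesis
      unfolding \<Delta>_def sdiff_def
      by (rule convex_smooth_gradient_cocoercive[where f = "\<lambda>z. F e z (om j (i - 1) a)"])
         (use F_convex[OF e w] F_grad[OF e w] F_smooth[OF e w] e in auto)
  qed
  then have "(norm ((1 / real (card {1..N (i - 1)})) *\<^sub>R (\<Sum>j = 1..N (i - 1). \<Delta> j)))\<^sup>2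
             \<le> 1 / e * (((1 / real (card {1..N (i - 1)})) *\<^sub>R (\<Sum>j = 1..N (i - 1). \<Delta> j)) \<bullet> s a i)"
    using N_pos[of "i - 1"] by (intro cocoercive_mean) auto
  moreover have "s a i \<noteq> 0"
    using nondegenerate[OF a i] by (simp add: sdiff_def)
  ultimately show ?thesis
    using e mu_pos[of i]
    by (auto simp: ydiff_def \<Delta>_def e_def sum_subtractf intro!: curvature_pair_regularized)
qed

lemma curvature_pair_at:
  assumes a: "a \<in> space M" and i: "odd i" "2 < i" "i \<le> k"
  shows "curvature_pair (curvature_ub k) (curvature_lb k) (s a i) (y a i)"
proof (rule curvature_pair_mono[OF curvature_pair_sample[OF a i(1,2)]])
  have "eta k powr delta \<le> eta i powr delta"
    using decseqD[OF decseq_eta_mu(1) i(3)] less_imp_le[OF eta_pos] delta_nonneg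
    by (intro powr_mono2) auto
  then have "1 / eta i powr delta \<le> 1 / eta k powr delta"
    using eta_pos[of i] eta_pos[of k] by (intro divide_left_mono) simp_all
  moreover have "mu i powr deltab \<le> mu 0 powr deltab"
    using decseqD[OF decseq_eta_mu(2), of 0 i] less_imp_le[OF mu_pos] deltab_nonneg
    by (intro powr_mono2) auto
  ultimately show "1 / eta i powr delta + mu i powr deltab \<le> curvature_ub k"
    by (simp add: curvature_ub_def)
  show "curvature_lb k \<le> mu i powr deltab"
    using decseqD[OF decseq_eta_mu(2) i(3)] less_imp_le[OF mu_pos] deltab_nonneg
    unfolding curvature_lb_def by (intro powr_mono2) auto
qed

lemma curvature_pairs_memory:
  assumes a: "a \<in> space M" and k: "odd k" "2 * m < k" "k \<le> k2"
  shows "curvature_pair (curvature_ub k2) (curvature_lb k2) (s a k) (y a k)"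
    and "\<And>j. j < m \<Longrightarrow> curvature_pair (curvature_ub k2) (curvature_lb k2)
                 (s a (k - 2 * (m - Suc j))) (y a (k - 2 * (m - Suc j)))"
proof -
  show "curvature_pair (curvature_ub k2) (curvature_lb k2) (s a k) (y a k)"
    using k m_pos by (intro curvature_pair_at[OF a]) auto
  fix j
  assume "j < m"
  then have "2 * (m - Suc j) + 2 < k"
    using k by simp
  then show "curvature_pair (curvature_ub k2) (curvature_lb k2)
               (s a (k - 2 * (m - Suc j))) (y a (k - 2 * (m - Suc j)))"
    using k by (intro curvature_pair_at[OF a]) auto
qed

lemma H_odd_representative:
  assumes "2 * m < k"
  obtains k' where "odd k'" "2 * m < k'" "k' \<le> k" "\<And>a. H k a = H k' a"
proof (cases "odd k")
  case False
  then have "odd (k - 1)" "2 * m < k - 1"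
    using assms by presburger+
  with False show ?thesis
    using that[of "k - 1"] H_even[OF assms] by auto
qed (use assms that in auto)

lemma inner_s_y_pos:
  assumes "a \<in> space M" "odd k" "2 * m < k"
  shows "0 < s a k \<bullet> y a k"
  using curvature_pairs_memory(1)[OF assms order.refl] by (simp add: curvature_pair_def)

lemma H_secant:
  assumes "a \<in> space M" "odd k" "2 * m < k"
  shows "H k a *v y a k = s a k"
  using inner_s_y_pos[OF assms] m_pos
  by (simp add: H_odd[OF assms(3,2)] lbfgs_H_secant inner_commute)

lemma H_symmetric:
  assumes "2 * m < k"
  shows "transpose (H k a) = H k a"
proof -
  obtain k' where "odd k'" "2 * m < k'" "\<And>a. H k a = H k' a"
    using H_odd_representative[OF assms] by metis
  then show ?thesis
    by (simp add: H_odd transpose_lbfgs_H)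
qed

lemma H_lower_bound:
  assumes a: "a \<in> space M" and k: "2 * m < k"
  shows "(norm v)\<^sup>2 / (real (Suc m) * curvature_ub k) \<le> v \<bullet> (H k a *v v)"
proof -
  obtain k' where k': "odd k'" "2 * m < k'" "k' \<le> k" and "\<And>a. H k a = H k' a"
    using H_odd_representative[OF k] by metis
  then show ?thesis
    using lbfgs_H_lower_bound[OF curvature_pairs_memory[OF a k'] order.refl]
    by (simp add: H_odd)
qed

lemma H_upper_bound:
  assumes a: "a \<in> space M" and k: "2 * m < k"
  shows "v \<bullet> (H k a *v v)
         \<le> (\<Sum>p\<le>m. (1 + curvature_ub k / curvature_lb k) ^ (2 * p)) / curvature_lb k * (norm v)\<^sup>2"
proof -
  obtain k' where k': "odd k'" "2 * m < k'" "k' \<le> k" and "\<And>a. H k a = H k' a"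
    using H_odd_representative[OF k] by metis
  then show ?thesis
    using lbfgs_H_upper_bound[OF curvature_pairs_memory[OF a k'] curvature_lb_pos order.refl]
    by (simp add: H_odd)
qed

lemma H_loewner_lower:
  assumes a: "a \<in> space M" and k: "2 * m < k" and n: "m < n"
  shows "loewner_le ((1 / (real (m + n) * curvature_ub k)) *\<^sub>R mat 1) (H k a)"
proof (unfold loewner_le_scaled_identity_left, intro allI)
  fix v :: "real^'n"
  have "real (Suc m) * curvature_ub k \<le> real (m + n) * curvature_ub k"
    using n less_imp_le[OF curvature_ub_pos] by (intro mult_right_mono) auto
  then have "1 / (real (m + n) * curvature_ub k) \<le> 1 / (real (Suc m) * curvature_ub k)"
    using curvature_ub_pos by (intro divide_left_mono) auto
  then have "1 / (real (m + n) * curvature_ub k) * (norm v)\<^sup>2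
             \<le> 1 / (real (Suc m) * curvature_ub k) * (norm v)\<^sup>2"
    by (rule mult_right_mono) simp
  also have "\<dots> \<le> v \<bullet> (H k a *v v)"
    using H_lower_bound[OF a k, of v] by simp
  finally show "1 / (real (m + n) * curvature_ub k) * (norm v)\<^sup>2 \<le> v \<bullet> (H k a *v v)" .
qed

lemma H_loewner_upper:
  assumes a: "a \<in> space M" and k: "2 * m < k" and n: "m < n"
  shows "loewner_le (H k a)
           ((real (m + n) ^ (n + m - 1) * curvature_ub k ^ (n + m - 1)
             / (fact (n - 1) * mu k powr (real (n + m) * deltab))) *\<^sub>R mat 1)"
proof -
  have "mu k powr (real (n + m) * deltab) = (mu k powr deltab) powr real (n + m)"
    by (simp add: powr_powr mult.commute)
  also have "\<dots> = curvature_lb k ^ (n + m)"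
    using curvature_lb_pos[of k] unfolding curvature_lb_def by (rule powr_realpow)
  finally have lb_power: "mu k powr (real (n + m) * deltab) = curvature_lb k ^ (n + m)" .
  show ?thesis
  proof (unfold loewner_le_scaled_identity_right lb_power, intro allI)
    fix v :: "real^'n"
    have "v \<bullet> (H k a *v v)
          \<le> (\<Sum>p\<le>m. (1 + curvature_ub k / curvature_lb k) ^ (2 * p)) / curvature_lb k * (norm v)\<^sup>2"
      by (rule H_upper_bound[OF a k])
    also have "\<dots> \<le> real (m + n) ^ (n + m - 1) * curvature_ub k ^ (n + m - 1)
                    / (fact (n - 1) * curvature_lb k ^ (n + m)) * (norm v)\<^sup>2"
      using lbfgs_upper_constant_le[OF m_pos n curvature_lb_pos curvature_lb_le_ub]
      by (rule mult_right_mono) simp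
    finally show "v \<bullet> (H k a *v v)
          \<le> real (m + n) ^ (n + m - 1) * curvature_ub k ^ (n + m - 1)
             / (fact (n - 1) * curvature_lb k ^ (n + m)) * (norm v)\<^sup>2" .
  qed
qed

lemma measurable_sample_gradient:
  assumes e: "0 < e" and z: "z \<in> borel_measurable (hist M W om N k)" and j: "1 \<le> j" "j \<le> N i" "i < k"
  shows "(\<lambda>a. gradF e (z a) (om j i a)) \<in> borel_measurable (hist M W om N k)"
  by (rule borel_measurable_gradient[OF F_meas[OF e] F_grad[OF e] z measurable_hist_sample[where om = om and N = N, OF om_meas j]])

lemma measurable_x_Suc:
  assumes "x k \<in> borel_measurable (hist M W om N k)" "H k \<in> borel_measurable (hist M W om N k)"
  shows "x (Suc k) \<in> borel_measurable (hist M W om N (Suc k))"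
proof -
  note [measurable] = assms[THEN measurable_hist_mono, of "Suc k"]
  have [measurable]: "(\<lambda>a. \<Sum>j = 1..N k. gradFeta_mu gradF x0 (eta k) (mu k) (x k a) (om j k a))
                      \<in> borel_measurable (hist M W om N (Suc k))"
  proof (rule borel_measurable_sum)
    fix j
    assume "j \<in> {1..N k}"
    then have [measurable]: "(\<lambda>a. gradF (eta k) (x k a) (om j k a)) \<in> borel_measurable (hist M W om N (Suc k))"
      using eta_pos by (intro measurable_sample_gradient) auto
    show "(\<lambda>a. gradFeta_mu gradF x0 (eta k) (mu k) (x k a) (om j k a)) \<in> borel_measurable (hist M W om N (Suc k))"
      unfolding gradFeta_mu_def by measurable
  qed
  have x_Suc: "x (Suc k) = (\<lambda>a. x k a - gamma k *\<^sub>R (H k a *v ((1 / real (N k)) *\<^sub>R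
                       (\<Sum>j = 1..N k. gradFeta_mu gradF x0 (eta k) (mu k) (x k a) (om j k a)))))"
    by (simp add: fun_eq_iff x_step avg_grad_def)
  show ?thesis
    unfolding x_Suc by measurable
qed

lemma measurable_H_odd:
  assumes k: "odd k" "2 * m < k" and x: "\<And>i. i \<le> k \<Longrightarrow> x i \<in> borel_measurable (hist M W om N k)"
  shows "H k \<in> borel_measurable (hist M W om N k)"
proof -
  have s: "(\<lambda>a. s a i) \<in> borel_measurable (hist M W om N k)" if "i \<le> k" for i
    using x[OF that] x[of "i - 1"] that by (simp add: sdiff_def)
  have y: "(\<lambda>a. y a i) \<in> borel_measurable (hist M W om N k)" if i: "i \<le> k" for i
  proof -
    have i': "i - 1 \<le> k"
      using i by simp
    have e: "0 < eta i powr delta"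
      using eta_pos[of i] by simp
    have "(\<lambda>a. gradF (eta i powr delta) (x i a) (om j (i - 1) a)) \<in> borel_measurable (hist M W om N k)"
      and "(\<lambda>a. gradF (eta i powr delta) (x (i - 1) a) (om j (i - 1) a)) \<in> borel_measurable (hist M W om N k)"
      if "j \<in> {1..N (i - 1)}" for j
      using that i k by (intro measurable_sample_gradient[OF e x[OF i]] measurable_sample_gradient[OF e x[OF i']]; simp)+
    then show ?thesis
      unfolding ydiff_def
      by (intro borel_measurable_add borel_measurable_scaleR borel_measurable_sum borel_measurable_diff
          borel_measurable_const s[OF i])
  qed
  have "H k = (\<lambda>a. lbfgs_H (s a) (y a) m k m)"
    by (simp add: fun_eq_iff H_odd[OF k(2,1)])
  then show ?thesis
    using borel_measurable_lbfgs_H[of k "\<lambda>a. s a" "hist M W om N k" "\<lambda>a. y a" m m, OF s y]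
    by simp
qed

lemma measurable_x_H:
  "x k \<in> borel_measurable (hist M W om N k) \<and> H k \<in> borel_measurable (hist M W om N k)"
proof (induction k rule: less_induct)
  case (less k)
  have x_k: "x k \<in> borel_measurable (hist M W om N k)"
  proof (cases k)
    case 0
    have "x 0 = (\<lambda>a. x0)"
      using x_init by (simp add: fun_eq_iff)
    with 0 show ?thesis
      by simp
  next
    case (Suc k')
    then show ?thesis
      using less.IH[of k'] measurable_x_Suc by simp
  qed
  have x: "x i \<in> borel_measurable (hist M W om N k)" if "i \<le> k" for i
    using x_k less.IH[of i] that measurable_hist_mono by (cases "i = k") auto
  consider "k \<le> 2 * m" | "2 * m < k" "odd k" | "2 * m < k" "even k"
    by linarith
  then have "H k \<in> borel_measurable (hist M W om N k)"
  proof cases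
    case 3
    then have "H (k - 1) \<in> borel_measurable (hist M W om N (k - 1))"
      using less.IH[of "k - 1"] by simp
    then have "H (k - 1) \<in> borel_measurable (hist M W om N k)"
      by (rule measurable_hist_mono) simp
    moreover have "H k = H (k - 1)"
      using H_even[OF 3] by (simp add: fun_eq_iff)
    ultimately show ?thesis
      by simp
  qed (use H_init_meas measurable_H_odd x in auto)
  with x_k show ?case ..
qed

end

theorem mainTheorem12:
  fixes M :: "'a measure" and W :: "'w measure"
    and F :: "real \<Rightarrow> real^'n \<Rightarrow> 'w \<Rightarrow> real"
    and gradF :: "real \<Rightarrow> real^'n \<Rightarrow> 'w \<Rightarrow> real^'n"
    and om :: "nat \<Rightarrow> nat \<Rightarrow> 'a \<Rightarrow> 'w"
    and N :: "nat \<Rightarrow> nat"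
    and gamma eta mu :: "nat \<Rightarrow> real"
    and delta deltab :: real
    and n m :: nat
    and x0 :: "real^'n"
    and x :: "nat \<Rightarrow> 'a \<Rightarrow> real^'n"
    and H :: "nat \<Rightarrow> 'a \<Rightarrow> real^'n^'n"
  assumes prob: "prob_space M"
    and om_meas: "\<And>j k. om j k \<in> M \<rightarrow>\<^sub>M W"
    and F_meas: "\<And>e. e > 0 \<Longrightarrow> (\<lambda>(z, w). F e z w) \<in> borel_measurable (borel \<Otimes>\<^sub>M W)"
    and F_grad: "\<And>e z w. e > 0 \<Longrightarrow> w \<in> space W \<Longrightarrow>
                   ((\<lambda>z. F e z w) has_derivative (\<lambda>h. gradF e z w \<bullet> h)) (at z)"
    and F_C1: "\<And>e w. e > 0 \<Longrightarrow> w \<in> space W \<Longrightarrow> continuous_on UNIV (\<lambda>z. gradF e z w)"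
    and F_convex: "\<And>e w. e > 0 \<Longrightarrow> w \<in> space W \<Longrightarrow> convex_on UNIV (\<lambda>z. F e z w)"
    and F_smooth: "\<And>e z z' w. e > 0 \<Longrightarrow> w \<in> space W \<Longrightarrow>
                   norm (gradF e z w - gradF e z' w) \<le> (1 / e) * norm (z - z')"
    and n_def: "n = CARD('n)"
    and m_pos: "1 \<le> m" and m_lt: "m < n"
    and delta: "0 < delta" "delta \<le> 1"
    and deltab: "0 < deltab" "deltab \<le> 1"
    and params_pos: "\<And>k. gamma k > 0" "\<And>k. eta k > 0" "\<And>k. mu k > 0"
    and N_pos: "\<And>k. 1 \<le> N k"
    and params_odd: "\<And>k. odd k \<Longrightarrow> mu k = mu (k - 1) \<and> eta k = eta (k - 1)"
    and params_even: "\<And>k. even k \<Longrightarrow> 0 < k \<Longrightarrow> mu k < mu (k - 1) \<and> eta k < eta (k - 1)"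
    and x_init: "\<And>a. x 0 a = x0"
    and x_step: "\<And>k a. x (Suc k) a =
        x k a - gamma k *\<^sub>R (H k a *v avg_grad gradF x0 eta mu N (\<lambda>j i. om j i a) (\<lambda>i. x i a) k)"
    and H_init_meas: "\<And>k. k \<le> 2 * m \<Longrightarrow> H k \<in> borel_measurable (hist M W om N k)"
    and H_odd: "\<And>k a. 2 * m < k \<Longrightarrow> odd k \<Longrightarrow>
        H k a = lbfgs_H (sdiff (\<lambda>i. x i a))
                        (ydiff gradF eta mu N (\<lambda>j i. om j i a) delta deltab (\<lambda>i. x i a)) m k m"
    and H_even: "\<And>k a. 2 * m < k \<Longrightarrow> even k \<Longrightarrow> H k a = H (k - 1) a"
    and nondegenerate: "\<And>i a. a \<in> space M \<Longrightarrow> odd i \<Longrightarrow> 2 < i \<Longrightarrow> x i a \<noteq> x (i - 1) a"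
  shows
    "(\<forall>k a. a \<in> space M \<longrightarrow> odd k \<longrightarrow> 2 * m < k \<longrightarrow>
        sdiff (\<lambda>i. x i a) k \<bullet> ydiff gradF eta mu N (\<lambda>j i. om j i a) delta deltab (\<lambda>i. x i a) k > 0)
   \<and> (\<forall>k a. a \<in> space M \<longrightarrow> odd k \<longrightarrow> 2 * m < k \<longrightarrow>
        H k a *v ydiff gradF eta mu N (\<lambda>j i. om j i a) delta deltab (\<lambda>i. x i a) k
          = sdiff (\<lambda>i. x i a) k)
   \<and> (\<forall>k. 2 * m < k \<longrightarrow>
        (\<forall>a \<in> space M. transpose (H k a) = H k a)
      \<and> H k \<in> borel_measurable (hist M W om N k)
      \<and> (AE a in M.
           loewner_le ((1 / (real (m + n) * (1 / eta k powr delta + mu 0 powr deltab))) *\<^sub>R mat 1) (H k a)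
         \<and> loewner_le (H k a)
             ((real (m + n) ^ (n + m - 1) * (1 / eta k powr delta + mu 0 powr deltab) ^ (n + m - 1)
               / (fact (n - 1) * mu k powr (real (n + m) * deltab))) *\<^sub>R mat 1)))"
proof -
  \<comment> \<open>Not needed: \<open>prob\<close>, \<open>F_C1\<close> (implied by smoothness), \<open>n_def\<close> (only \<open>m < n\<close> matters),
    the upper bounds on \<open>delta\<close>, \<open>deltab\<close> and the positivity of \<open>gamma\<close>.\<close>
  interpret rs_lbfgs M W F gradF om N gamma eta mu delta deltab m x0 x H
    by unfold_locales
      (rule om_meas F_meas F_grad F_convex F_smooth m_pos params_pos N_pos params_odd params_even
         x_init x_step H_init_meas H_odd H_even nondegenerate less_imp_le[OF delta(1)]
         less_imp_le[OF deltab(1)] | assumption)+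
  have bounds: "AE a in M.
           loewner_le ((1 / (real (m + n) * (1 / eta k powr delta + mu 0 powr deltab))) *\<^sub>R mat 1) (H k a)
         \<and> loewner_le (H k a)
             ((real (m + n) ^ (n + m - 1) * (1 / eta k powr delta + mu 0 powr deltab) ^ (n + m - 1)
               / (fact (n - 1) * mu k powr (real (n + m) * deltab))) *\<^sub>R mat 1)"
    if "2 * m < k" for k
    using H_loewner_lower[OF _ that m_lt] H_loewner_upper[OF _ that m_lt]
    by (intro AE_I2) (simp add: curvature_ub_def)
  show ?thesis
    using inner_s_y_pos H_secant H_symmetric measurable_x_H bounds by blast
qed

end
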